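(* There are absolute constants $\bar c>0$ such that if $c_1,c_2\le\bar c$ (e.g. $c_1=c_2=\frac1{200}$), the concentration conditions (CC) hold at $\mathbf{x}_t$ with constants $c_1,c_2$, $c_3\in[0,1)$, and $\mathbf{\Delta}_t$ satisfies the Case 2 requirement (namely, whenever $\|\mathbf{\Delta}_t^\star\|\ge\frac12\sqrt{\epsilon/\rho}$, $\tilde m_t(\mathbf{\Delta}_t)\le\tilde m_t(\mathbf{\Delta}_t^\star)+\frac{c_3}{12}\rho\|\mathbf{\Delta}_t^\star\|^3$), and $\mathbf{x}_t+\mathbf{\Delta}_t^\star$ is not an $\epsilon$-second-order stationary point of $f$, then $m_t(\mathbf{x}_t+\mathbf{\Delta}_t)-m_t(\mathbf{x}_t)\le-\frac{1-c_3}{96}\sqrt{\epsilon^3/\rho}$.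
   Context: $f:\mathbb{R}^d\to\mathbb{R}$ twice differentiable with $\rho$-Lipschitz Hessian (spectral norm); $\epsilon>0$. $\epsilon$-second-order stationary point: $\|\nabla f(\mathbf{x})\|\le\epsilon$ and $\lambda_{\min}(\nabla^2 f(\mathbf{x}))\ge-\sqrt{\rho\epsilon}$. (CC) at $\mathbf{x}_t$ with constants $c_1,c_2$: vector $\mathbf{g}_t$ and symmetric matrix $\mathbf{B}_t$ with $\|\mathbf{g}_t-\nabla f(\mathbf{x}_t)\|\le c_1\epsilon$ and $\|(\mathbf{B}_t-\nabla^2 f(\mathbf{x}_t))\mathbf{v}\|\le c_2\sqrt{\rho\epsilon}\|\mathbf{v}\|$ for all $\mathbf{v}$. Cubic model: $m_t(\mathbf{y})=f(\mathbf{x}_t)+(\mathbf{y}-\mathbf{x}_t)^\top\mathbf{g}_t+\frac12(\mathbf{y}-\mathbf{x}_t)^\top\mathbf{B}_t(\mathbf{y}-\mathbf{x}_t)+\frac\rho6\|\mathbf{y}-\mathbf{x}_t\|^3$, $\tilde m_t(\mathbf{\Delta})=m_t(\mathbf{x}_t+\mathbf{\Delta})-f(\mathbf{x}_t)$, and $\mathbf{\Delta}_t^\star$ a global minimizer of $\tilde m_t$. *)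

theory Defs
  imports "HOL-Analysis.Analysis"
begin

definition is_eigenvalue :: "real^'n^'n \<Rightarrow> real \<Rightarrow> bool" where
  "is_eigenvalue A l \<longleftrightarrow> (\<exists>v. v \<noteq> 0 \<and> A *v v = l *\<^sub>R v)"

text \<open>Smallest eigenvalue (used for symmetric matrices, where it exists).\<close>
definition lambda_min :: "real^'n^'n \<Rightarrow> real" where
  "lambda_min A = Inf {l. is_eigenvalue A l}"

definition is_eps_sosp ::
  "(real^'n \<Rightarrow> real^'n) \<Rightarrow> (real^'n \<Rightarrow> real^'n^'n) \<Rightarrow> real \<Rightarrow> real \<Rightarrow> real^'n \<Rightarrow> bool" where
  "is_eps_sosp grad H \<rho> \<epsilon> x \<longleftrightarrow> norm (grad x) \<le> \<epsilon> \<and> lambda_min (H x) \<ge> - sqrt (\<rho> * \<epsilon>)"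

definition cubic_model ::
  "(real^'n \<Rightarrow> real) \<Rightarrow> real^'n \<Rightarrow> real^'n \<Rightarrow> real^'n^'n \<Rightarrow> real \<Rightarrow> real^'n \<Rightarrow> real" where
  "cubic_model f x g B \<rho> y =
     f x + (y - x) \<bullet> g + 1/2 * ((y - x) \<bullet> (B *v (y - x))) + \<rho> / 6 * norm (y - x) ^ 3"

definition cubic_model_shift ::
  "(real^'n \<Rightarrow> real) \<Rightarrow> real^'n \<Rightarrow> real^'n \<Rightarrow> real^'n^'n \<Rightarrow> real \<Rightarrow> real^'n \<Rightarrow> real" where
  "cubic_model_shift f x g B \<rho> D = cubic_model f x g B \<rho> (x + D) - f x"

end

theory Submission
  imports Defs
begin

text \<open>
  A global minimiser D* of the cubic model satisfies g + B D* + (rho/2) |D*| D* = 0 and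
  B + (rho/2) |D*| I >= 0, and these two conditions give m(D*) <= - rho |D*|^3 / 12.
  If |D*| were smaller than sqrt(eps/rho)/2, the same two conditions, the accuracy of g and B
  and the Lipschitz Hessian would make x + D* an eps-second-order stationary point.
  Hence |D*| >= sqrt(eps/rho)/2, and the Case 2 requirement yields
  m(D) <= - (1 - c3) rho |D*|^3 / 12 <= - (1 - c3) sqrt(eps^3/rho) / 96.
\<close>

lemma perturbed_nonneg_imp_nonneg:
  fixes q a b :: real
  assumes "\<And>t. t > 0 \<Longrightarrow> 0 \<le> q + t * a + t\<^sup>2 * b"
  shows "0 \<le> q"
proof (rule tendsto_lowerbound)
  show "((\<lambda>t. q + t * a + t\<^sup>2 * b) \<longlongrightarrow> q) (at_right 0)"
    by (auto intro!: tendsto_eq_intros)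
  show "\<forall>\<^sub>F t in at_right 0. 0 \<le> q + t * a + t\<^sup>2 * b"
    using assms by (auto simp: eventually_at_right_less eventually_at_right_field intro: exI[of _ 1])
qed simp

lemma symmetric_matrix_inner_swap:
  fixes B :: "real^'n^'n"
  assumes "transpose B = B"
  shows "u \<bullet> (B *v w) = w \<bullet> (B *v u)"
  by (metis assms dot_lmul_matrix inner_commute transpose_transpose vector_transpose_matrix)

lemma hessian_lipschitz_gradient_error:
  fixes grad :: "real^'n \<Rightarrow> real^'n" and H :: "real^'n \<Rightarrow> real^'n^'n"
  assumes hess: "\<And>y. (grad has_derivative (\<lambda>h. H y *v h)) (at y)"
    and lip: "\<And>y z. onorm (\<lambda>v. (H y - H z) *v v) \<le> \<rho> * norm (y - z)"
    and rho: "0 \<le> \<rho>"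
  shows "norm (grad z - grad y - H y *v (z - y)) \<le> \<rho> * (norm (z - y))\<^sup>2"
proof -
  let ?S = "cball y (norm (z - y))"
  have "norm (grad z - grad y - H y *v (z - y)) \<le> norm (z - y) * (\<rho> * norm (z - y))"
  proof (rule differentiable_bound_linearization[where S = ?S and f' = "\<lambda>x h. H x *v h"])
    show "y + t *\<^sub>R (z - y) \<in> ?S" if "t \<in> {0..1}" for t
      using that by (simp add: dist_norm mult_left_le_one_le)
    show "(grad has_derivative (\<lambda>h. H x *v h)) (at x within ?S)" for x
      using hess has_derivative_at_withinI by blast
    show "onorm ((\<lambda>h. H x *v h) - (\<lambda>h. H y *v h)) \<le> \<rho> * norm (z - y)" if "x \<in> ?S" for x
    proof -
      have "onorm ((\<lambda>h. H x *v h) - (\<lambda>h. H y *v h)) = onorm (\<lambda>v. (H x - H y) *v v)"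
        by (simp add: fun_diff_def matrix_vector_mult_diff_rdistrib)
      also have "\<dots> \<le> \<rho> * norm (x - y)" by (rule lip)
      also have "\<dots> \<le> \<rho> * norm (z - y)"
        using that rho by (intro mult_left_mono) (auto simp: dist_norm norm_minus_commute)
      finally show ?thesis .
    qed
  qed simp
  then show ?thesis by (simp add: power2_eq_square mult_ac)
qed

lemma hessian_lipschitz_taylor_error:
  fixes f :: "real^'n \<Rightarrow> real" and grad :: "real^'n \<Rightarrow> real^'n" and H :: "real^'n \<Rightarrow> real^'n^'n"
  assumes grad: "\<And>y. (f has_derivative (\<lambda>h. grad y \<bullet> h)) (at y)"
    and hess: "\<And>y. (grad has_derivative (\<lambda>h. H y *v h)) (at y)"
    and lip: "\<And>y z. onorm (\<lambda>v. (H y - H z) *v v) \<le> \<rho> * norm (y - z)"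
    and rho: "0 \<le> \<rho>"
  shows "\<bar>f (z + d) - f z - (grad y + H y *v (z - y)) \<bullet> d - 1/2 * (d \<bullet> (H y *v d))\<bar>
          \<le> \<rho> * (norm (z - y) + norm d)\<^sup>2 * norm d"
proof -
  define \<phi> where "\<phi> t = f (z + t *\<^sub>R d) - t * ((grad y + H y *v (z - y)) \<bullet> d) - t\<^sup>2 / 2 * (d \<bullet> (H y *v d))" for t
  define \<phi>' where "\<phi>' t = d \<bullet> (grad (z + t *\<^sub>R d) - grad y - H y *v (z + t *\<^sub>R d - y))" for t
  have "DERIV \<phi> t :> \<phi>' t" for t
  proof -
    have "((\<lambda>t. f (z + t *\<^sub>R d)) has_derivative (\<lambda>s. grad (z + t *\<^sub>R d) \<bullet> (s *\<^sub>R d))) (at t)"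
      by (rule has_derivative_compose[OF _ grad]) (auto intro!: derivative_eq_intros)
    then have "DERIV (\<lambda>t. f (z + t *\<^sub>R d)) t :> grad (z + t *\<^sub>R d) \<bullet> d"
      by (rule has_derivative_imp_has_field_derivative) (simp add: mult.commute)
    then show ?thesis unfolding \<phi>_def \<phi>'_def
      by (auto intro!: derivative_eq_intros
          simp: inner_diff_right inner_add_left inner_commute matrix_vector_right_distrib
            matrix_vector_mult_diff_distrib algebra_simps)
  qed
  then obtain t where t: "0 < t" "t < 1" "\<phi> 1 - \<phi> 0 = \<phi>' t"
    using MVT2[of 0 1 \<phi> \<phi>'] by auto
  have "norm (z + t *\<^sub>R d - y) \<le> norm (z - y) + t * norm d"
    using norm_triangle_ineq[of "z - y" "t *\<^sub>R d"] t by (simp add: algebra_simps)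
  also have "\<dots> \<le> norm (z - y) + norm d"
    using t by (simp add: mult_left_le_one_le)
  finally have "\<bar>\<phi>' t\<bar> \<le> norm d * (\<rho> * (norm (z - y) + norm d)\<^sup>2)"
    unfolding \<phi>'_def
    using Cauchy_Schwarz_ineq2 hessian_lipschitz_gradient_error[OF hess lip rho, of "z + t *\<^sub>R d" y]
    by (smt (verit) mult_left_mono norm_ge_zero power_mono rho)
  moreover have "\<phi> 1 - \<phi> 0 = f (z + d) - f z - (grad y + H y *v (z - y)) \<bullet> d - 1/2 * (d \<bullet> (H y *v d))"
    by (simp add: \<phi>_def)
  ultimately show ?thesis using t by (simp add: mult_ac)
qed

lemma hessian_lipschitz_second_difference:
  fixes f :: "real^'n \<Rightarrow> real" and grad :: "real^'n \<Rightarrow> real^'n" and H :: "real^'n \<Rightarrow> real^'n^'n"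
  assumes grad: "\<And>y. (f has_derivative (\<lambda>h. grad y \<bullet> h)) (at y)"
    and hess: "\<And>y. (grad has_derivative (\<lambda>h. H y *v h)) (at y)"
    and lip: "\<And>y z. onorm (\<lambda>v. (H y - H z) *v v) \<le> \<rho> * norm (y - z)"
    and rho: "0 \<le> \<rho>"
  shows "\<bar>f (y + h + k) - f (y + h) - f (y + k) + f y - k \<bullet> (H y *v h)\<bar>
          \<le> 2 * \<rho> * (norm h + norm k) ^ 3"
proof -
  note taylor = hessian_lipschitz_taylor_error[OF grad hess lip rho]
  have nk: "norm k \<le> norm h + norm k" by simp
  then have "(norm h + norm k)\<^sup>2 * norm k \<le> (norm h + norm k) ^ 3"
    "(norm k)\<^sup>2 * norm k \<le> (norm h + norm k) ^ 3"
    by (auto simp: power3_eq_cube power2_eq_square intro!: mult_left_mono mult_mono)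
  then have "\<rho> * (norm h + norm k)\<^sup>2 * norm k \<le> \<rho> * (norm h + norm k) ^ 3"
    "\<rho> * (norm k)\<^sup>2 * norm k \<le> \<rho> * (norm h + norm k) ^ 3"
    using rho by (simp_all add: mult.assoc mult_left_mono)
  then show ?thesis
    using taylor[of "y + h" k y] taylor[of y k y]
    by (simp add: inner_add_left inner_commute algebra_simps)
qed

text \<open>Symmetry of the Hessian is not a hypothesis of the theorem, but it is needed:
  \<open>lambda_min\<close> is an infimum over eigenvalues, which is a junk value unless real eigenvalues exist.\<close>

lemma hessian_lipschitz_hessian_symmetric:
  fixes f :: "real^'n \<Rightarrow> real" and grad :: "real^'n \<Rightarrow> real^'n" and H :: "real^'n \<Rightarrow> real^'n^'n"
  assumes grad: "\<And>y. (f has_derivative (\<lambda>h. grad y \<bullet> h)) (at y)"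
    and hess: "\<And>y. (grad has_derivative (\<lambda>h. H y *v h)) (at y)"
    and lip: "\<And>y z. onorm (\<lambda>v. (H y - H z) *v v) \<le> \<rho> * norm (y - z)"
    and rho: "0 \<le> \<rho>"
  shows "h \<bullet> (H y *v k) = k \<bullet> (H y *v h)"
proof -
  define a where "a = h \<bullet> (H y *v k) - k \<bullet> (H y *v h)"
  define K where "K = 4 * \<rho> * (norm h + norm k) ^ 3"
  have "0 \<le> - \<bar>a\<bar> + s * K + s\<^sup>2 * 0" if s: "s > 0" for s
  proof -
    define \<Delta> where "\<Delta> = f (y + s *\<^sub>R h + s *\<^sub>R k) - f (y + s *\<^sub>R h) - f (y + s *\<^sub>R k) + f y"
    note second_diff = hessian_lipschitz_second_difference[OF grad hess lip rho, of y]
    have "\<bar>\<Delta> - s\<^sup>2 * (k \<bullet> (H y *v h))\<bar> \<le> 2 * \<rho> * (s * (norm h + norm k)) ^ 3"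
      using second_diff[of "s *\<^sub>R h" "s *\<^sub>R k"] s
      by (simp add: \<Delta>_def matrix_vector_mult_scaleR power2_eq_square algebra_simps)
    moreover have "\<bar>\<Delta> - s\<^sup>2 * (h \<bullet> (H y *v k))\<bar> \<le> 2 * \<rho> * (s * (norm h + norm k)) ^ 3"
      using second_diff[of "s *\<^sub>R k" "s *\<^sub>R h"] s
      by (simp add: \<Delta>_def matrix_vector_mult_scaleR power2_eq_square add.commute add.left_commute
          algebra_simps)
    moreover have "s\<^sup>2 * \<bar>a\<bar> = \<bar>(\<Delta> - s\<^sup>2 * (k \<bullet> (H y *v h))) - (\<Delta> - s\<^sup>2 * (h \<bullet> (H y *v k)))\<bar>"
      by (simp add: a_def abs_mult flip: right_diff_distrib)
    ultimately have "s\<^sup>2 * \<bar>a\<bar> \<le> 4 * \<rho> * (s * (norm h + norm k)) ^ 3"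
      by linarith
    then have "s\<^sup>2 * \<bar>a\<bar> \<le> s\<^sup>2 * (s * K)"
      by (simp add: K_def power3_eq_cube power2_eq_square algebra_simps)
    with s show ?thesis by (simp add: mult_le_cancel_left)
  qed
  then have "0 \<le> - \<bar>a\<bar>" by (rule perturbed_nonneg_imp_nonneg)
  then show ?thesis by (simp add: a_def)
qed

lemma symmetric_matrix_has_eigenvalue:
  fixes A :: "real^'n^'n"
  assumes sym: "\<And>u w. u \<bullet> (A *v w) = w \<bullet> (A *v u)"
  shows "\<exists>l. is_eigenvalue A l"
proof -
  define Q where "Q w = w \<bullet> (A *v w)" for w :: "real^'n"
  have Q_cont: "continuous_on (sphere 0 1) Q"
    unfolding Q_def by (intro continuous_intros linear_continuous_on matrix_vector_mul_bounded_linear)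
  then obtain v where v: "v \<in> sphere 0 1" and v_min: "\<And>w. w \<in> sphere 0 1 \<Longrightarrow> Q v \<le> Q w"
    using continuous_attains_inf[OF compact_sphere _ Q_cont] by auto
  define P where "P w = Q w - Q v * (w \<bullet> w)" for w
  \<comment> \<open>The Rayleigh quotient is minimal at \<open>v\<close>, so \<open>v\<close> minimises \<open>P\<close> globally.\<close>
  have "P v \<le> P w" for w
  proof (cases "w = 0")
    case False
    then have "Q v \<le> Q ((1 / norm w) *\<^sub>R w)" by (intro v_min) simp
    then have "Q v * (w \<bullet> w) \<le> Q w"
      using False by (simp add: Q_def matrix_vector_mult_scaleR dot_square_norm field_simps power2_eq_square)
    with v show ?thesis by (simp add: P_def dot_square_norm)
  qed (use v in \<open>simp add: P_def Q_def dot_square_norm\<close>)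
  moreover have "(P has_derivative (\<lambda>h. v \<bullet> (A *v h) + h \<bullet> (A *v v) - Q v * (v \<bullet> h + h \<bullet> v))) (at v)"
    unfolding P_def Q_def
    by (intro has_derivative_diff has_derivative_mult_right has_derivative_inner has_derivative_ident
        bounded_linear.has_derivative[OF matrix_vector_mul_bounded_linear])
  ultimately have "(\<lambda>h. v \<bullet> (A *v h) + h \<bullet> (A *v v) - Q v * (v \<bullet> h + h \<bullet> v)) = (\<lambda>h. 0)"
    by (intro differential_zero_maxmin[of v UNIV]) auto
  note derivative_zero = fun_cong[OF this]
  have "h \<bullet> (A *v v - Q v *\<^sub>R v) = 0" for h
    using derivative_zero[of h] sym[of v h] by (simp add: inner_diff_right inner_commute algebra_simps)
  from this[of "A *v v - Q v *\<^sub>R v"] have "A *v v = Q v *\<^sub>R v" by simp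
  moreover have "v \<noteq> 0" using v by auto
  ultimately show ?thesis unfolding is_eigenvalue_def by blast
qed

lemma lambda_min_ge_if_quadratic_form_ge:
  fixes A :: "real^'n^'n"
  assumes sym: "\<And>u w. u \<bullet> (A *v w) = w \<bullet> (A *v u)"
    and bound: "\<And>v. c * (norm v)\<^sup>2 \<le> v \<bullet> (A *v v)"
  shows "c \<le> lambda_min A"
  unfolding lambda_min_def
proof (rule cInf_greatest)
  show "{l. is_eigenvalue A l} \<noteq> {}" using symmetric_matrix_has_eigenvalue[OF sym] by blast
  fix l assume "l \<in> {l. is_eigenvalue A l}"
  then obtain v where v: "v \<noteq> 0" "A *v v = l *\<^sub>R v" by (auto simp: is_eigenvalue_def)
  then have "c * (norm v)\<^sup>2 \<le> l * (norm v)\<^sup>2"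
    using bound[of v] by (simp add: power2_norm_eq_inner)
  with v show "c \<le> l" by simp
qed

definition cubic_reg :: "real^'n \<Rightarrow> real^'n^'n \<Rightarrow> real \<Rightarrow> real^'n \<Rightarrow> real" where
  "cubic_reg g B \<rho> D = D \<bullet> g + 1/2 * (D \<bullet> (B *v D)) + \<rho> / 6 * norm D ^ 3"

lemma cubic_model_shift_eq_cubic_reg: "cubic_model_shift f x g B \<rho> D = cubic_reg g B \<rho> D"
  by (simp add: cubic_model_shift_def cubic_model_def cubic_reg_def)

lemma cubic_reg_minimizer_stationary:
  fixes B :: "real^'n^'n" and g D :: "real^'n"
  assumes sym: "\<And>u w. u \<bullet> (B *v w) = w \<bullet> (B *v u)"
    and min: "\<And>D'. cubic_reg g B \<rho> D \<le> cubic_reg g B \<rho> D'"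
  shows "g + B *v D + (\<rho> / 2 * norm D) *\<^sub>R D = 0"
proof (cases "D = 0")
  case True
  have "0 \<le> - (g \<bullet> g) + t * (1/2 * (g \<bullet> (B *v g))) + t\<^sup>2 * (\<rho> / 6 * norm g ^ 3)" if t: "t > 0" for t
  proof -
    have "0 \<le> t * (- (g \<bullet> g) + t * (1/2 * (g \<bullet> (B *v g))) + t\<^sup>2 * (\<rho> / 6 * norm g ^ 3))"
      using min[of "(-t) *\<^sub>R g"] True t
      by (simp add: cubic_reg_def linear_neg[OF matrix_vector_mul_linear] matrix_vector_mult_scaleR
          power2_eq_square power3_eq_cube algebra_simps)
    with t show ?thesis by (simp add: zero_le_mult_iff)
  qed
  then have "0 \<le> - (g \<bullet> g)" by (rule perturbed_nonneg_imp_nonneg)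
  then have "g = 0" using inner_gt_zero_iff[of g] by linarith
  with True show ?thesis by simp
next
  case False
  let ?G = "g + B *v D + (\<rho> / 2 * norm D) *\<^sub>R D"
  have norm_cube: "((\<lambda>E. norm E ^ 3) has_derivative (\<lambda>h. 3 * (h \<bullet> sgn D) * norm D ^ 2)) (at D)"
    using has_derivative_power[OF has_derivative_norm[OF False], of 3] by simp
  have "(cubic_reg g B \<rho> has_derivative (\<lambda>h. h \<bullet> ?G)) (at D)"
    unfolding cubic_reg_def
  proof (rule has_derivative_eq_rhs)
    show "((\<lambda>E. E \<bullet> g + 1/2 * (E \<bullet> (B *v E)) + \<rho> / 6 * norm E ^ 3) has_derivative
        (\<lambda>h. h \<bullet> g + 1/2 * (D \<bullet> (B *v h) + h \<bullet> (B *v D)) + \<rho> / 6 * (3 * (h \<bullet> sgn D) * norm D ^ 2))) (at D)"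
      by (intro has_derivative_add has_derivative_mult_right has_derivative_inner has_derivative_ident
          norm_cube
          bounded_linear.has_derivative[OF matrix_vector_mul_bounded_linear]
          bounded_linear.has_derivative[OF bounded_linear_inner_left])
    show "(\<lambda>h. h \<bullet> g + 1/2 * (D \<bullet> (B *v h) + h \<bullet> (B *v D)) + \<rho> / 6 * (3 * (h \<bullet> sgn D) * norm D ^ 2))
        = (\<lambda>h. h \<bullet> ?G)"
      using sym[of D] False by (auto simp: fun_eq_iff sgn_div_norm power2_eq_square inner_add_right algebra_simps)
  qed
  then have "(\<lambda>h. h \<bullet> ?G) = (\<lambda>h. 0)"
    using min by (intro differential_zero_maxmin[of D UNIV]) auto
  from fun_cong[OF this, of ?G] show ?thesis by simp
qed

lemma cubic_reg_minimizer_sphere_increment: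
  fixes B :: "real^'n^'n" and g D w :: "real^'n"
  assumes sym: "\<And>u w. u \<bullet> (B *v w) = w \<bullet> (B *v u)"
    and min: "\<And>D'. cubic_reg g B \<rho> D \<le> cubic_reg g B \<rho> D'"
    and sphere: "norm (D + w) = norm D"
  shows "0 \<le> w \<bullet> (B *v w) + \<rho> / 2 * norm D * (norm w)\<^sup>2"
proof -
  have g: "g = - (B *v D) - (\<rho> / 2 * norm D) *\<^sub>R D"
    using cubic_reg_minimizer_stationary[OF sym min] by (simp add: algebra_simps eq_neg_iff_add_eq_0)
  have "(D + w) \<bullet> (D + w) = D \<bullet> D" using sphere by (metis dot_square_norm)
  then have wD: "w \<bullet> D = - (norm w)\<^sup>2 / 2"
    by (simp add: inner_add_left inner_add_right inner_commute power2_norm_eq_inner)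
  have "cubic_reg g B \<rho> (D + w) - cubic_reg g B \<rho> D = w \<bullet> g + 1/2 * (2 * (w \<bullet> (B *v D)) + w \<bullet> (B *v w))"
    using sphere sym[of D w]
    by (simp add: cubic_reg_def inner_add_left inner_add_right matrix_vector_right_distrib algebra_simps)
  also have "\<dots> = 1/2 * (w \<bullet> (B *v w) + \<rho> / 2 * norm D * (norm w)\<^sup>2)"
    unfolding g using wD by (simp add: inner_diff_right inner_minus_right inner_commute algebra_simps)
  finally show ?thesis using min[of "D + w"] by simp
qed

lemma cubic_reg_minimizer_second_order:
  fixes B :: "real^'n^'n" and g D v :: "real^'n"
  assumes sym: "\<And>u w. u \<bullet> (B *v w) = w \<bullet> (B *v u)"
    and min: "\<And>D'. cubic_reg g B \<rho> D \<le> cubic_reg g B \<rho> D'"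
  shows "0 \<le> v \<bullet> (B *v v) + \<rho> / 2 * norm D * (norm v)\<^sup>2"
proof (cases "D = 0")
  case True
  then have g: "g = 0" using cubic_reg_minimizer_stationary[OF sym min] by simp
  have "0 \<le> v \<bullet> (B *v v) + t * (\<rho> / 3 * norm v ^ 3) + t\<^sup>2 * 0" if t: "t > 0" for t
  proof -
    have "0 \<le> t\<^sup>2 * (1/2 * (v \<bullet> (B *v v)) + t * (\<rho> / 6 * norm v ^ 3))"
      using min[of "t *\<^sub>R v"] True g t
      by (simp add: cubic_reg_def matrix_vector_mult_scaleR power2_eq_square power3_eq_cube algebra_simps)
    with t show ?thesis by (simp add: zero_le_mult_iff)
  qed
  then have "0 \<le> v \<bullet> (B *v v)" by (rule perturbed_nonneg_imp_nonneg)
  with True show ?thesis by simp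
next
  case False
  define q where "q u = u \<bullet> (B *v u) + \<rho> / 2 * norm D * (norm u)\<^sup>2" for u
  \<comment> \<open>A direction not orthogonal to \<open>D\<close> can be rescaled to reach the sphere of radius \<open>norm D\<close>.\<close>
  have transversal: "0 \<le> q u" if uD: "u \<bullet> D \<noteq> 0" for u
  proof -
    have uu: "u \<bullet> u > 0" using uD by auto
    define s where "s = - 2 * (u \<bullet> D) / (u \<bullet> u)"
    have "(D + s *\<^sub>R u) \<bullet> (D + s *\<^sub>R u) = D \<bullet> D + s * (2 * (u \<bullet> D) + s * (u \<bullet> u))"
      by (simp add: inner_add_left inner_add_right inner_commute algebra_simps)
    also have "\<dots> = D \<bullet> D" using uu by (simp add: s_def field_simps)
    finally have "norm (D + s *\<^sub>R u) = norm D" by (simp add: norm_eq_sqrt_inner)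
    from cubic_reg_minimizer_sphere_increment[OF sym min this] have "0 \<le> s\<^sup>2 * q u"
      by (simp add: q_def matrix_vector_mult_scaleR power_mult_distrib power2_eq_square algebra_simps)
    moreover have "s \<noteq> 0" using uD uu by (simp add: s_def)
    ultimately show ?thesis by (simp add: zero_le_mult_iff)
  qed
  show ?thesis
  proof (cases "v \<bullet> D = 0")
    case True
    have "0 \<le> q v + t * (2 * (v \<bullet> (B *v D))) + t\<^sup>2 * q D" if t: "t > 0" for t
    proof -
      have "(v + t *\<^sub>R D) \<bullet> D \<noteq> 0" using True t False by (simp add: inner_add_left)
      moreover have "q (v + t *\<^sub>R D) = q v + t * (2 * (v \<bullet> (B *v D))) + t\<^sup>2 * q D"
        unfolding q_def power2_norm_eq_inner using True sym[of v D]
        by (simp add: inner_add_left inner_add_right matrix_vector_right_distrib matrix_vector_mult_scaleR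
            inner_commute power2_eq_square algebra_simps)
      ultimately show ?thesis using transversal by fastforce
    qed
    then show ?thesis unfolding q_def[symmetric] by (rule perturbed_nonneg_imp_nonneg)
  qed (use transversal q_def in auto)
qed

lemma cubic_reg_minimum_le:
  fixes B :: "real^'n^'n" and g D :: "real^'n"
  assumes sym: "\<And>u w. u \<bullet> (B *v w) = w \<bullet> (B *v u)"
    and min: "\<And>D'. cubic_reg g B \<rho> D \<le> cubic_reg g B \<rho> D'"
  shows "cubic_reg g B \<rho> D \<le> - \<rho> / 12 * norm D ^ 3"
proof -
  have "D \<bullet> g = - (D \<bullet> (B *v D)) - \<rho> / 2 * norm D * (norm D)\<^sup>2"
    using arg_cong[OF cubic_reg_minimizer_stationary[OF sym min], of "inner D"]
    by (simp add: inner_add_right power2_norm_eq_inner algebra_simps)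
  moreover have "0 \<le> D \<bullet> (B *v D) + \<rho> / 2 * norm D * (norm D)\<^sup>2"
    by (rule cubic_reg_minimizer_second_order[OF sym min])
  ultimately show ?thesis by (simp add: cubic_reg_def power2_eq_square power3_eq_cube algebra_simps)
qed

lemma hessian_lipschitz_gradient_after_step:
  fixes grad :: "real^'n \<Rightarrow> real^'n" and H :: "real^'n \<Rightarrow> real^'n^'n"
  assumes hess: "\<And>y. (grad has_derivative (\<lambda>h. H y *v h)) (at y)"
    and lip: "\<And>y z. onorm (\<lambda>v. (H y - H z) *v v) \<le> \<rho> * norm (y - z)"
    and rho: "0 \<le> \<rho>"
    and stationary: "g + B *v D + (\<rho> / 2 * norm D) *\<^sub>R D = 0"
    and approx: "\<And>v. norm ((B - H x) *v v) \<le> \<delta> * norm v"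
  shows "norm (grad (x + D)) \<le> norm (g - grad x) + \<delta> * norm D + 3/2 * \<rho> * (norm D)\<^sup>2"
proof -
  define E where "E = grad (x + D) - grad x - H x *v D"
  have step: "grad (x + D) = (grad x - g) - (B - H x) *v D - (\<rho> / 2 * norm D) *\<^sub>R D + E"
    using stationary unfolding E_def
    by (simp add: matrix_vector_mult_diff_rdistrib algebra_simps eq_neg_iff_add_eq_0)
  have "norm (grad (x + D))
      \<le> norm (grad x - g) + norm ((B - H x) *v D) + norm ((\<rho> / 2 * norm D) *\<^sub>R D) + norm E"
    unfolding step using norm_triangle_ineq[of "grad x - g - (B - H x) *v D - (\<rho> / 2 * norm D) *\<^sub>R D" E]
      norm_triangle_ineq4[of "grad x - g - (B - H x) *v D" "(\<rho> / 2 * norm D) *\<^sub>R D"]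
      norm_triangle_ineq4[of "grad x - g" "(B - H x) *v D"]
    by linarith
  moreover have "norm E \<le> \<rho> * (norm D)\<^sup>2"
    using hessian_lipschitz_gradient_error[OF hess lip rho, of "x + D" x] by (simp add: E_def)
  moreover have "norm ((\<rho> / 2 * norm D) *\<^sub>R D) = \<rho> / 2 * (norm D)\<^sup>2"
    using rho by (simp add: power2_eq_square)
  ultimately show ?thesis using approx[of D] by (simp add: norm_minus_commute)
qed

lemma hessian_lipschitz_lambda_min_after_step:
  fixes f :: "real^'n \<Rightarrow> real" and grad :: "real^'n \<Rightarrow> real^'n" and H :: "real^'n \<Rightarrow> real^'n^'n"
  assumes grad: "\<And>y. (f has_derivative (\<lambda>h. grad y \<bullet> h)) (at y)"
    and hess: "\<And>y. (grad has_derivative (\<lambda>h. H y *v h)) (at y)"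
    and lip: "\<And>y z. onorm (\<lambda>v. (H y - H z) *v v) \<le> \<rho> * norm (y - z)"
    and rho: "0 \<le> \<rho>"
    and second_order: "\<And>v. 0 \<le> v \<bullet> (B *v v) + \<rho> / 2 * norm D * (norm v)\<^sup>2"
    and approx: "\<And>v. norm ((B - H x) *v v) \<le> \<delta> * norm v"
  shows "- (\<delta> + 3/2 * \<rho> * norm D) \<le> lambda_min (H (x + D))"
proof (rule lambda_min_ge_if_quadratic_form_ge)
  show "u \<bullet> (H (x + D) *v w) = w \<bullet> (H (x + D) *v u)" for u w
    by (rule hessian_lipschitz_hessian_symmetric[OF grad hess lip rho])
  fix v
  have "\<bar>v \<bullet> ((B - H x) *v v)\<bar> \<le> \<delta> * (norm v)\<^sup>2"
    using Cauchy_Schwarz_ineq2[of v "(B - H x) *v v"] approx[of v]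
    by (smt (verit) mult_left_mono norm_ge_zero power2_eq_square mult.commute mult.left_commute)
  moreover have "\<bar>v \<bullet> ((H (x + D) - H x) *v v)\<bar> \<le> \<rho> * norm D * (norm v)\<^sup>2"
  proof -
    have "norm ((H (x + D) - H x) *v v) \<le> onorm (\<lambda>v. (H (x + D) - H x) *v v) * norm v"
      by (rule onorm) simp
    also have "\<dots> \<le> \<rho> * norm D * norm v"
      using lip[of "x + D" x] by (intro mult_right_mono) auto
    finally show ?thesis
      using Cauchy_Schwarz_ineq2[of v "(H (x + D) - H x) *v v"]
      by (smt (verit) mult_left_mono norm_ge_zero power2_eq_square mult.commute mult.left_commute)
  qed
  moreover have "v \<bullet> (H (x + D) *v v) = v \<bullet> (B *v v) - v \<bullet> ((B - H x) *v v) + v \<bullet> ((H (x + D) - H x) *v v)"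
    by (simp add: matrix_vector_mult_diff_rdistrib inner_diff_right)
  ultimately show "- (\<delta> + 3/2 * \<rho> * norm D) * (norm v)\<^sup>2 \<le> v \<bullet> (H (x + D) *v v)"
    using second_order[of v] by (simp add: abs_le_iff algebra_simps)
qed

lemma cubic_reg_minimizer_large_if_not_sosp:
  fixes f :: "real^'n \<Rightarrow> real" and grad :: "real^'n \<Rightarrow> real^'n" and H :: "real^'n \<Rightarrow> real^'n^'n"
  assumes grad: "\<And>y. (f has_derivative (\<lambda>h. grad y \<bullet> h)) (at y)"
    and hess: "\<And>y. (grad has_derivative (\<lambda>h. H y *v h)) (at y)"
    and rho_pos: "\<rho> > 0"
    and lip: "\<And>y z. onorm (\<lambda>v. (H y - H z) *v v) \<le> \<rho> * norm (y - z)"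
    and eps_pos: "\<epsilon> > 0"
    and c1: "c1 \<le> 1/200" and c2: "c2 \<le> 1/200"
    and sym: "\<And>u w. u \<bullet> (B *v w) = w \<bullet> (B *v u)"
    and cc1: "norm (g - grad x) \<le> c1 * \<epsilon>"
    and cc2: "\<And>v. norm ((B - H x) *v v) \<le> c2 * sqrt (\<rho> * \<epsilon>) * norm v"
    and min: "\<And>D'. cubic_reg g B \<rho> D \<le> cubic_reg g B \<rho> D'"
    and not_sosp: "\<not> is_eps_sosp grad H \<rho> \<epsilon> (x + D)"
  shows "1/2 * sqrt (\<epsilon> / \<rho>) \<le> norm D"
proof (rule ccontr)
  define r where "r = norm D"
  define s where "s = sqrt (\<epsilon> / \<rho>)"
  assume "\<not> 1/2 * sqrt (\<epsilon> / \<rho>) \<le> norm D"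
  then have r_small: "r \<le> s / 2" by (simp add: r_def s_def)
  have r: "0 \<le> r" by (simp add: r_def)
  have s: "0 \<le> s" "\<epsilon> = \<rho> * s\<^sup>2" using eps_pos rho_pos by (simp_all add: s_def)
  have sqrt_rho_eps: "sqrt (\<rho> * \<epsilon>) = \<rho> * s"
    using rho_pos s by (simp add: real_sqrt_mult power2_eq_square)
  have approx: "norm ((B - H x) *v v) \<le> c2 * (\<rho> * s) * norm v" for v
    using cc2[of v] by (simp add: sqrt_rho_eps)
  have c2_bound: "c2 * (\<rho> * s) \<le> \<rho> * s / 200"
    using mult_right_mono[OF c2, of "\<rho> * s"] rho_pos s by simp
  have c1_bound: "norm (g - grad x) \<le> \<epsilon> / 200"
    using cc1 mult_right_mono[OF c1 less_imp_le[OF eps_pos]] by linarith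
  have "norm (grad (x + D)) \<le> norm (g - grad x) + c2 * (\<rho> * s) * r + 3/2 * \<rho> * r\<^sup>2"
    using hessian_lipschitz_gradient_after_step[OF hess lip _
        cubic_reg_minimizer_stationary[OF sym min] approx] rho_pos by (simp add: r_def)
  also have "\<dots> \<le> \<epsilon> / 200 + \<rho> * s / 200 * (s / 2) + 3/2 * \<rho> * (s / 2)\<^sup>2"
    using c1_bound c2_bound r r_small rho_pos s
    by (intro add_mono mult_mono mult_left_mono power_mono) auto
  also have "\<dots> \<le> \<epsilon>" using s rho_pos by (simp add: power2_eq_square algebra_simps)
  finally have "norm (grad (x + D)) \<le> \<epsilon>" .
  moreover have "- (c2 * (\<rho> * s) + 3/2 * \<rho> * r) \<le> lambda_min (H (x + D))"
    using hessian_lipschitz_lambda_min_after_step[OF grad hess lip _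
        cubic_reg_minimizer_second_order[OF sym min] approx] rho_pos by (simp add: r_def)
  moreover have "c2 * (\<rho> * s) + 3/2 * (\<rho> * r) \<le> sqrt (\<rho> * \<epsilon>)"
  proof -
    have "\<rho> * r \<le> \<rho> * s / 2" using mult_left_mono[OF r_small, of \<rho>] rho_pos by simp
    moreover have "0 \<le> \<rho> * s" using rho_pos s by simp
    ultimately show ?thesis using c2_bound unfolding sqrt_rho_eps by linarith
  qed
  ultimately show False using not_sosp by (simp add: is_eps_sosp_def)
qed

theorem claim1:
  fixes f :: "real^'n \<Rightarrow> real"
    and grad :: "real^'n \<Rightarrow> real^'n"
    and H :: "real^'n \<Rightarrow> real^'n^'n"
    and \<rho> \<epsilon> c1 c2 c3 :: real
    and x g D Dstar :: "real^'n"
    and B :: "real^'n^'n"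
  assumes grad: "\<And>y. (f has_derivative (\<lambda>h. grad y \<bullet> h)) (at y)"
    and hess: "\<And>y. (grad has_derivative (\<lambda>h. H y *v h)) (at y)"
    and rho_pos: "\<rho> > 0"
    and lip: "\<And>y z. onorm (\<lambda>v. (H y - H z) *v v) \<le> \<rho> * norm (y - z)"
    and eps_pos: "\<epsilon> > 0"
    and c1: "c1 \<le> 1/200" and c2: "c2 \<le> 1/200"
    and B_sym: "transpose B = B"
    and cc1: "norm (g - grad x) \<le> c1 * \<epsilon>"
    and cc2: "\<And>v. norm ((B - H x) *v v) \<le> c2 * sqrt (\<rho> * \<epsilon>) * norm v"
    and c3: "0 \<le> c3" "c3 < 1"
    and Dstar_min: "\<And>D'. cubic_model_shift f x g B \<rho> Dstar \<le> cubic_model_shift f x g B \<rho> D'"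
    and case2: "norm Dstar \<ge> 1/2 * sqrt (\<epsilon> / \<rho>) \<longrightarrow>
       cubic_model_shift f x g B \<rho> D \<le> cubic_model_shift f x g B \<rho> Dstar + c3 / 12 * \<rho> * norm Dstar ^ 3"
    and not_sosp: "\<not> is_eps_sosp grad H \<rho> \<epsilon> (x + Dstar)"
  shows "cubic_model f x g B \<rho> (x + D) - cubic_model f x g B \<rho> x \<le> - (1 - c3) / 96 * sqrt (\<epsilon> ^ 3 / \<rho>)"
proof -
  define s where "s = sqrt (\<epsilon> / \<rho>)"
  note sym = symmetric_matrix_inner_swap[OF B_sym]
  note min = Dstar_min[unfolded cubic_model_shift_eq_cubic_reg]
  have large: "s / 2 \<le> norm Dstar"
    using cubic_reg_minimizer_large_if_not_sosp[OF grad hess rho_pos lip eps_pos c1 c2 sym cc1 cc2 min not_sosp]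
    by (simp add: s_def)
  have "cubic_model f x g B \<rho> (x + D) - cubic_model f x g B \<rho> x = cubic_reg g B \<rho> D"
    by (simp add: cubic_model_def cubic_reg_def)
  also have "\<dots> \<le> cubic_reg g B \<rho> Dstar + c3 / 12 * \<rho> * norm Dstar ^ 3"
    using case2 large by (simp add: s_def cubic_model_shift_eq_cubic_reg)
  also have "\<dots> \<le> - (1 - c3) / 12 * \<rho> * norm Dstar ^ 3"
    using cubic_reg_minimum_le[OF sym min] by (simp add: algebra_simps)
  also have "\<dots> \<le> - (1 - c3) / 12 * \<rho> * (s / 2) ^ 3"
    using c3 rho_pos eps_pos large
    by (intro mult_left_mono_neg power_mono) (auto simp: s_def mult_nonpos_nonneg)
  also have "\<dots> = - (1 - c3) / 96 * sqrt (\<epsilon> ^ 3 / \<rho>)"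
  proof -
    have "\<epsilon> ^ 3 / \<rho> = (\<rho> * s ^ 3)\<^sup>2"
      using eps_pos rho_pos by (simp add: s_def power_mult_distrib power3_eq_cube power2_eq_square field_simps)
    moreover have "0 \<le> \<rho> * s ^ 3" using rho_pos eps_pos by (simp add: s_def)
    ultimately show ?thesis by (simp add: power_divide)
  qed
  finally show ?thesis .
qed

end
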